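(* Let $\{J_m(z)\}_{m\geq 0}$ be the sequence generated by $\sum_{m=0}^{\infty}J_m(z)t^m=\frac{1}{1+t+zt^3}$. For $\theta\in(2\pi/3,\pi)$ define \[ r=r(\theta)=\frac{1-4\cos^2\theta}{2\cos\theta},\quad q=q(\theta)=-2\cos\theta,\quad z=z(\theta)=-\frac{1}{r(\theta)^3q(\theta)}, \] \[ t_1=r(\theta)e^{i\theta},\quad t_2=r(\theta)e^{-i\theta},\quad t_3=r(\theta)q(\theta). \] Then for each $\theta\in(2\pi/3,\pi)$ and each $m\geq 0$, \[ J_m(z(\theta))=\frac{q^{m+1}\big[(-2\cos\theta)\sin((m+1)\theta)-\sin((m+2)\theta)\big]+\sin\theta}{z(t_1-t_2)(t_2-t_3)(t_3-t_1)\,t_1^{m+1}t_2^{m+1}t_3^{m+1}}\cdot 2i\, r^{2m+3}. \]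
   Context: A sequence $\{J_m(z)\}$ is generated by $f(t,z)$ if, for each $z\in\mathbb{C}$, $f(t,z)$ is analytic in $t$ in a neighborhood of $t=0$ and $J_m(z)$ is the coefficient of $t^m$ in the power series expansion of $f(t,z)$ in $t$ about $0$. *)

theory Defs
  imports "HOL-Analysis.Analysis"
begin

definition gen_seq :: "(complex \<Rightarrow> complex \<Rightarrow> complex) \<Rightarrow> nat \<Rightarrow> complex \<Rightarrow> complex" where
  "gen_seq f m z = (deriv ^^ m) (\<lambda>t. f t z) 0 / of_nat (fact m)"

definition J :: "nat \<Rightarrow> complex \<Rightarrow> complex" where
  "J m z = gen_seq (\<lambda>t z. 1 / (1 + t + z * t ^ 3)) m z"

definition r_th :: "real \<Rightarrow> real" where
  "r_th \<theta> = (1 - 4 * (cos \<theta>)\<^sup>2) / (2 * cos \<theta>)"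

definition q_th :: "real \<Rightarrow> real" where
  "q_th \<theta> = - 2 * cos \<theta>"

definition z_th :: "real \<Rightarrow> complex" where
  "z_th \<theta> = complex_of_real (- 1 / ((r_th \<theta>) ^ 3 * q_th \<theta>))"

end

theory Submission
  imports Defs
begin

text \<open>Multiplying the generating function by 1 + t + z t^3 shows that J_m(z) satisfies
J_{m+3} = - J_{m+2} - z J_m with J_0 = 1, J_1 = -1, J_2 = 1. If t1, t2, t3 are distinct roots of
1 + t + z t^3, their reciprocals are roots of the characteristic polynomial a^3 + a^2 + z, and the
partial-fraction expansion of 1 / (1 + t + z t^3) shows which combination of the powers
(1/t_k)^(m+1) has the right initial values; by uniqueness it equals J_m(z). For the given
parametrisation, e^(i\<theta>) and e^(-i\<theta>) are the roots of w^2 + q w + 1, which makes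
r e^(i\<theta>), r e^(-i\<theta>) and r q the roots of the cubic, and the numerator of the
partial-fraction formula collapses to sines via e^(ik\<theta>) - e^(-ik\<theta>) = 2i sin(k\<theta>).\<close>

lemma recurrence3_eqI:
  fixes f g :: "nat \<Rightarrow> 'a"
  assumes "f 0 = g 0" "f 1 = g 1" "f 2 = g 2"
    and "\<And>n. f (n + 3) = h (f n) (f (n + 1)) (f (n + 2))"
    and "\<And>n. g (n + 3) = h (g n) (g (n + 1)) (g (n + 2))"
  shows "f n = g n"
proof (induction n rule: less_induct)
  case (less n)
  show ?case
  proof (cases "n < 3")
    case True
    then have "n = 0 \<or> n = 1 \<or> n = 2" by auto
    then show ?thesis using assms(1-3) by auto
  next
    case False
    then obtain k where "n = k + 3" by (metis add.commute le_Suc_ex not_less)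
    then show ?thesis using less.IH[of k] less.IH[of "k + 1"] less.IH[of "k + 2"] assms(4,5) by simp
  qed
qed

lemma cubic_roots_vieta:
  fixes z t1 t2 t3 :: "'a::idom"
  assumes "1 + t1 + z * t1 ^ 3 = 0" "1 + t2 + z * t2 ^ 3 = 0" "1 + t3 + z * t3 ^ 3 = 0"
    and "t1 \<noteq> t2" "t2 \<noteq> t3" "t3 \<noteq> t1"
  shows "t1 + t2 + t3 = 0" "z * (t1 * t2 + t2 * t3 + t3 * t1) = 1" "z * (t1 * t2 * t3) = -1"
proof -
  have "(t1 - t2) * (1 + z * (t1\<^sup>2 + t1 * t2 + t2\<^sup>2)) = 0"
    using assms(1,2) by algebra
  then have e12: "1 + z * (t1\<^sup>2 + t1 * t2 + t2\<^sup>2) = 0" using assms(4) by simp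
  have "(t1 - t3) * (1 + z * (t1\<^sup>2 + t1 * t3 + t3\<^sup>2)) = 0"
    using assms(1,3) by algebra
  then have e13: "1 + z * (t1\<^sup>2 + t1 * t3 + t3\<^sup>2) = 0" using assms(6) by simp
  have "z \<noteq> 0" using e12 by auto
  moreover have "z * (t2 - t3) * (t1 + t2 + t3) = 0" using e12 e13 by algebra
  ultimately show e1: "t1 + t2 + t3 = 0" using assms(5) by simp
  show "z * (t1 * t2 + t2 * t3 + t3 * t1) = 1" using e1 e12 by algebra
  then show "z * (t1 * t2 * t3) = -1" using e1 assms(3) by algebra
qed

lemma inverse_root_power_recurrence:
  fixes z t :: "'a::field"
  assumes "1 + t + z * t ^ 3 = 0"
  shows "(1 / t) ^ (n + 3) = - ((1 / t) ^ (n + 2)) - z * (1 / t) ^ n"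
proof -
  have "t \<noteq> 0" using assms by auto
  then show ?thesis using assms by (simp add: field_simps power_add) algebra
qed

lemma J_eq_fps_nth: "J m z = fps_nth (inverse (1 + fps_X + fps_const z * fps_X ^ 3)) m"
proof -
  have "(\<lambda>t. 1 + t + z * t ^ 3) has_fps_expansion 1 + fps_X + fps_const z * fps_X ^ 3"
    by (intro fps_expansion_intros)
  then have "(\<lambda>t. inverse (1 + t + z * t ^ 3))
      has_fps_expansion inverse (1 + fps_X + fps_const z * fps_X ^ 3)"
    by (intro fps_expansion_intros) auto
  then show ?thesis
    unfolding J_def gen_seq_def by (simp add: fps_nth_fps_expansion inverse_eq_divide)
qed

lemma J_coefficient_equation:
  "J n z + (if n = 0 then 0 else J (n - 1) z) + z * (if n < 3 then 0 else J (n - 3) z)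
     = (if n = 0 then 1 else 0)"
proof -
  define P where "P = 1 + fps_X + fps_const z * fps_X ^ 3"
  have "inverse P * P = 1" unfolding P_def by (simp add: inverse_mult_eq_1)
  then have "fps_nth (inverse P + fps_X * inverse P + fps_const z * (fps_X ^ 3 * inverse P)) n
      = fps_nth 1 n"
    unfolding P_def by (simp add: algebra_simps)
  then show ?thesis
    unfolding J_eq_fps_nth P_def[symmetric] by (simp add: fps_X_power_mult_nth fps_X_mult_nth)
qed

lemma J_initial: "J 0 z = 1" "J 1 z = -1" "J 2 z = 1"
proof -
  show J0: "J 0 z = 1" using J_coefficient_equation[of 0 z] by simp
  show J1: "J 1 z = -1" using J_coefficient_equation[of 1 z] J0 by (simp add: eq_neg_iff_add_eq_0)
  show "J 2 z = 1" using J_coefficient_equation[of 2 z] J1 by (simp add: add_eq_0_iff)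
qed

lemma J_recurrence: "J (n + 3) z = - J (n + 2) z - z * J n z"
  using J_coefficient_equation[of "n + 3" z] by (simp add: algebra_simps eq_neg_iff_add_eq_0)

lemma J_partial_fractions:
  fixes z t1 t2 t3 :: complex
  assumes roots: "1 + t1 + z * t1 ^ 3 = 0" "1 + t2 + z * t2 ^ 3 = 0" "1 + t3 + z * t3 ^ 3 = 0"
    and distinct: "t1 \<noteq> t2" "t2 \<noteq> t3" "t3 \<noteq> t1"
  shows "J m z =
    ((t2 - t3) * (t2 * t3) ^ (m + 1) + (t3 - t1) * (t3 * t1) ^ (m + 1) + (t1 - t2) * (t1 * t2) ^ (m + 1))
    / (z * (t1 - t2) * (t2 - t3) * (t3 - t1) * t1 ^ (m + 1) * t2 ^ (m + 1) * t3 ^ (m + 1))"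
    (is "_ = ?rhs")
proof -
  note vieta = cubic_roots_vieta[OF assms]
  have nonzero: "t1 \<noteq> 0" "t2 \<noteq> 0" "t3 \<noteq> 0" "z \<noteq> 0"
    using roots vieta(3) by auto
  define D where "D = z * (t1 - t2) * (t2 - t3) * (t3 - t1)"
  have "D \<noteq> 0" unfolding D_def using nonzero distinct by simp
  define a1 a2 a3 where "a1 = 1 / t1" and "a2 = 1 / t2" and "a3 = 1 / t3"
  define N where "N n = (t2 - t3) * a1 ^ (n + 1) + (t3 - t1) * a2 ^ (n + 1) + (t1 - t2) * a3 ^ (n + 1)"
    for n
  have a_poly: "a1 = - z * (t2 * t3)" "a2 = - z * (t3 * t1)" "a3 = - z * (t1 * t2)"
    using vieta(3) nonzero unfolding a1_def a2_def a3_def by (simp_all add: field_simps)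
  have N_initial: "N 0 = D" "N 1 = - D" "N 2 = D"
    unfolding N_def D_def a_poly using vieta by (simp_all add: numeral_3_eq_3) algebra+
  have N_recurrence: "N (n + 3) = - N (n + 2) - z * N n" for n
  proof -
    have shift: "n + 3 + 1 = n + 1 + 3" "n + 2 + 1 = n + 1 + 2" by simp_all
    show ?thesis unfolding N_def shift
      inverse_root_power_recurrence[OF roots(1), of "n + 1", folded a1_def]
      inverse_root_power_recurrence[OF roots(2), of "n + 1", folded a2_def]
      inverse_root_power_recurrence[OF roots(3), of "n + 1", folded a3_def]
      by (simp add: algebra_simps)
  qed
  have "J m z = N m / D"
    by (rule recurrence3_eqI[where h = "\<lambda>a b c. - c - z * a"])
      (use J_initial J_recurrence N_initial N_recurrence \<open>D \<noteq> 0\<close> in \<open>simp_all add: diff_divide_distrib\<close>)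
  also have "N m / D = ?rhs"
  proof -
    define T where "T = (t1 * t2 * t3) ^ (m + 1)"
    have "T \<noteq> 0" unfolding T_def using nonzero by simp
    have "a1 * (t1 * t2 * t3) = t2 * t3" "a2 * (t1 * t2 * t3) = t3 * t1" "a3 * (t1 * t2 * t3) = t1 * t2"
      unfolding a1_def a2_def a3_def using nonzero by (simp_all add: field_simps)
    then have powers: "(t2 * t3) ^ (m + 1) = a1 ^ (m + 1) * T" "(t3 * t1) ^ (m + 1) = a2 ^ (m + 1) * T"
        "(t1 * t2) ^ (m + 1) = a3 ^ (m + 1) * T"
      unfolding T_def by (metis power_mult_distrib)+
    have "z * (t1 - t2) * (t2 - t3) * (t3 - t1) * t1 ^ (m + 1) * t2 ^ (m + 1) * t3 ^ (m + 1) = D * T"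
      unfolding D_def T_def by (simp add: power_mult_distrib mult_ac)
    moreover have "(t2 - t3) * (t2 * t3) ^ (m + 1) + (t3 - t1) * (t3 * t1) ^ (m + 1)
        + (t1 - t2) * (t1 * t2) ^ (m + 1) = N m * T"
      unfolding N_def powers by (simp add: algebra_simps)
    ultimately show ?thesis using \<open>T \<noteq> 0\<close> by simp
  qed
  finally show ?thesis .
qed

lemma cyclic_numerator_reciprocal_pair:
  fixes R Q w v :: "'a::comm_ring_1"
  assumes "w * v = 1"
  shows "(R * v - R * Q) * (R * v * (R * Q)) ^ (m + 1) + (R * Q - R * w) * (R * Q * (R * w)) ^ (m + 1)
      + (R * w - R * v) * (R * w * (R * v)) ^ (m + 1)
    = R ^ (2 * m + 3) * (Q ^ (m + 1) * (Q * (w ^ (m + 1) - v ^ (m + 1)) - (w ^ (m + 2) - v ^ (m + 2)))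
      + (w - v))"
proof -
  define K where "K = R ^ (2 * m + 2)"
  have square: "(R * R) ^ (m + 1) = K"
    unfolding K_def by (simp add: power_mult_distrib flip: power_add mult_2)
  have "(R * w * (R * v)) ^ (m + 1) = K"
    using assms by (simp flip: square add: power_mult_distrib mult_ac)
  moreover have "(R * v * (R * Q)) ^ (m + 1) = K * Q ^ (m + 1) * v ^ (m + 1)"
    "(R * Q * (R * w)) ^ (m + 1) = K * Q ^ (m + 1) * w ^ (m + 1)"
    by (simp_all flip: square add: power_mult_distrib mult_ac)
  moreover have "R ^ (2 * m + 3) = K * R" "w ^ (m + 2) = w * w ^ (m + 1)" "v ^ (m + 2) = v * v ^ (m + 1)"
    unfolding K_def by (simp_all add: power_add power3_eq_cube mult_ac)
  ultimately show ?thesis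
    by (simp only:) (simp add: algebra_simps)
qed

lemma exp_ii_power_diff:
  "exp (\<i> * complex_of_real x) ^ k - exp (- \<i> * complex_of_real x) ^ k
    = 2 * \<i> * complex_of_real (sin (real k * x))"
proof -
  have "exp (\<i> * complex_of_real x) ^ k - exp (- \<i> * complex_of_real x) ^ k
      = exp (\<i> * complex_of_real (real k * x)) - exp (- \<i> * complex_of_real (real k * x))"
    by (simp flip: exp_of_nat_mult add: mult_ac)
  also have "\<dots> = 2 * \<i> * sin (complex_of_real (real k * x))"
    unfolding sin_exp_eq by simp
  finally show ?thesis by (simp flip: sin_of_real)
qed

lemma theta_parameters:
  assumes "2 * pi / 3 < \<theta>" "\<theta> < pi"
  shows "1 < q_th \<theta>" "r_th \<theta> * q_th \<theta> = (q_th \<theta>)\<^sup>2 - 1" "r_th \<theta> \<noteq> 0" "0 < sin \<theta>"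
proof -
  have "cos \<theta> < cos (2 * pi / 3)"
    using assms by (intro cos_monotone_0_pi) auto
  moreover have "cos (2 * pi / 3) = - 1 / 2"
    using cos_pi_minus[of "pi / 3"] by (simp add: cos_60)
  ultimately have "cos \<theta> < - 1 / 2" by simp
  then show q: "1 < q_th \<theta>" unfolding q_th_def by simp
  show rq: "r_th \<theta> * q_th \<theta> = (q_th \<theta>)\<^sup>2 - 1"
    using \<open>cos \<theta> < - 1 / 2\<close> unfolding r_th_def q_th_def by (simp add: field_simps power2_eq_square)
  have "1 < (q_th \<theta>)\<^sup>2" using q by (simp add: less_1_mult power2_eq_square)
  then show "r_th \<theta> \<noteq> 0" using rq by auto
  show "0 < sin \<theta>" using assms by (intro sin_gt_zero) auto
qed

lemma roots_of_parametrized_cubic: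
  fixes r q w :: "'a::field"
  assumes "w\<^sup>2 + q * w + 1 = 0" "r * q = q\<^sup>2 - 1" "r \<noteq> 0" "q \<noteq> 0"
  defines "z \<equiv> - 1 / (r ^ 3 * q)"
  shows "1 + r * w + z * (r * w) ^ 3 = 0" "1 + r * q + z * (r * q) ^ 3 = 0"
proof -
  have "z * r ^ 3 = - 1 / q" unfolding z_def using assms(3) by (simp add: field_simps)
  then have z_cube: "z * (r * x) ^ 3 = - (x ^ 3) / q" for x
    by (simp add: power_mult_distrib mult.assoc[symmetric])
  show "1 + r * w + z * (r * w) ^ 3 = 0"
    unfolding z_cube using assms(1,2,4) by (simp add: field_simps) algebra
  show "1 + r * q + z * (r * q) ^ 3 = 0"
    unfolding z_cube using assms(2,4) by (simp add: field_simps power2_eq_square power3_eq_cube)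
qed

lemma theta_cubic_roots:
  assumes "2 * pi / 3 < \<theta>" "\<theta> < pi"
  defines "t1 \<equiv> complex_of_real (r_th \<theta>) * exp (\<i> * complex_of_real \<theta>)"
      and "t2 \<equiv> complex_of_real (r_th \<theta>) * exp (- \<i> * complex_of_real \<theta>)"
      and "t3 \<equiv> complex_of_real (r_th \<theta> * q_th \<theta>)"
  shows "1 + t1 + z_th \<theta> * t1 ^ 3 = 0" "1 + t2 + z_th \<theta> * t2 ^ 3 = 0" "1 + t3 + z_th \<theta> * t3 ^ 3 = 0"
    and "t1 \<noteq> t2" "t2 \<noteq> t3" "t3 \<noteq> t1"
proof -
  note params = theta_parameters[OF assms(1,2)]
  define w v where "w = exp (\<i> * complex_of_real \<theta>)" and "v = exp (- \<i> * complex_of_real \<theta>)"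
  define R Q where "R = complex_of_real (r_th \<theta>)" and "Q = complex_of_real (q_th \<theta>)"
  have nonzero: "R \<noteq> 0" "Q \<noteq> 0" using params unfolding R_def Q_def by auto
  have "w * v = 1" unfolding w_def v_def by (simp flip: exp_add)
  moreover have "w + v = - Q"
    unfolding w_def v_def Q_def q_th_def by (simp add: cos_exp_eq flip: cos_of_real)
  ultimately have quadratic: "w\<^sup>2 + Q * w + 1 = 0" "v\<^sup>2 + Q * v + 1 = 0" by algebra+
  have "R * Q = Q\<^sup>2 - 1"
    unfolding R_def Q_def by (metis params(2) of_real_1 of_real_diff of_real_mult of_real_power)
  moreover have "z_th \<theta> = - 1 / (R ^ 3 * Q)" unfolding z_th_def R_def Q_def by simp
  moreover have "t1 = R * w" "t2 = R * v" "t3 = R * Q"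
    unfolding t1_def t2_def t3_def R_def Q_def w_def v_def by simp_all
  ultimately show "1 + t1 + z_th \<theta> * t1 ^ 3 = 0" "1 + t2 + z_th \<theta> * t2 ^ 3 = 0"
      "1 + t3 + z_th \<theta> * t3 ^ 3 = 0"
    using roots_of_parametrized_cubic[OF quadratic(1) _ nonzero]
      roots_of_parametrized_cubic[OF quadratic(2) _ nonzero] by simp_all
  have "Im t1 = r_th \<theta> * sin \<theta>" "Im t2 = - r_th \<theta> * sin \<theta>" "Im t3 = 0"
    unfolding t1_def t2_def t3_def by (simp_all add: Im_exp)
  then show "t1 \<noteq> t2" "t2 \<noteq> t3" "t3 \<noteq> t1"
    using params by auto
qed

theorem mainTheorem17:
  fixes \<theta> :: real and m :: nat
  assumes "2 * pi / 3 < \<theta>" and "\<theta> < pi"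
  defines "r \<equiv> r_th \<theta>" and "q \<equiv> q_th \<theta>" and "z \<equiv> z_th \<theta>"
  defines "t1 \<equiv> complex_of_real r * exp (\<i> * complex_of_real \<theta>)"
      and "t2 \<equiv> complex_of_real r * exp (- \<i> * complex_of_real \<theta>)"
      and "t3 \<equiv> complex_of_real (r * q)"
  shows "J m z =
    complex_of_real (q ^ (m + 1) * ((- 2 * cos \<theta>) * sin (real (m + 1) * \<theta>) - sin (real (m + 2) * \<theta>)) + sin \<theta>)
    / (z * (t1 - t2) * (t2 - t3) * (t3 - t1) * t1 ^ (m + 1) * t2 ^ (m + 1) * t3 ^ (m + 1))
    * (2 * \<i> * complex_of_real (r ^ (2 * m + 3)))"
proof -
  have roots: "1 + t1 + z * t1 ^ 3 = 0" "1 + t2 + z * t2 ^ 3 = 0" "1 + t3 + z * t3 ^ 3 = 0"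
    and distinct: "t1 \<noteq> t2" "t2 \<noteq> t3" "t3 \<noteq> t1"
    using theta_cubic_roots[OF assms(1,2)] unfolding t1_def t2_def t3_def r_def q_def z_def by auto
  define w v where "w = exp (\<i> * complex_of_real \<theta>)" and "v = exp (- \<i> * complex_of_real \<theta>)"
  define R Q where "R = complex_of_real r" and "Q = complex_of_real q"
  have "w * v = 1" unfolding w_def v_def by (simp flip: exp_add)
  have "w ^ k - v ^ k = 2 * \<i> * complex_of_real (sin (real k * \<theta>))" for k
    unfolding w_def v_def by (rule exp_ii_power_diff)
  from this[of 1] this[of "m + 1"] this[of "m + 2"]
  have "Q ^ (m + 1) * (Q * (w ^ (m + 1) - v ^ (m + 1)) - (w ^ (m + 2) - v ^ (m + 2))) + (w - v)
    = 2 * \<i> * complex_of_real (q ^ (m + 1) * ((- 2 * cos \<theta>) * sin (real (m + 1) * \<theta>)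
        - sin (real (m + 2) * \<theta>)) + sin \<theta>)"
    unfolding Q_def q_def q_th_def by (simp add: algebra_simps)
  moreover have "t1 = R * w" "t2 = R * v" "t3 = R * Q"
    unfolding t1_def t2_def t3_def R_def Q_def w_def v_def by simp_all
  ultimately show ?thesis
    using cyclic_numerator_reciprocal_pair[OF \<open>w * v = 1\<close>, of R Q m]
    unfolding J_partial_fractions[OF roots distinct] by (simp add: R_def)
qed

end
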